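(* Let $\Bbbk$ be a field, $V$ a finite-dimensional $\Bbbk$-vector space and $R$ a Hecke symmetry on $V$ with parameter $q$. Assume $\dim\Upsilon^{(n)}=1$ and $\Upsilon^{(n+1)}=0$ for some $n>0$, and fix $0\neq t\in\Upsilon^{(n)}$. Then there are linear operators $\theta,\bar\theta\in GL(V)$ such that $$R_n^{(n+1)}R_{n-1}^{(n+1)}\cdots R_1^{(n+1)}(vt)=t\,\theta(v),\qquad R_1^{(n+1)}R_2^{(n+1)}\cdots R_n^{(n+1)}(tv)=\bar\theta(v)\,t$$ for all $v\in V$. Moreover, $\bar\theta=q^{n+1}\theta^{-1}$.
   Context: A Hecke symmetry on $V$ with parameter $0\neq q\in\Bbbk$ is a linear map $R:V\otimes V\to V\otimes V$ satisfying $(R\otimes\mathrm{Id}_V)(\mathrm{Id}_V\otimes R)(R\otimes\mathrm{Id}_V)=(\mathrm{Id}_V\otimes R)(R\otimes\mathrm{Id}_V)(\mathrm{Id}_V\otimes R)$ and $(R-q\,\mathrm{Id})(R+\mathrm{Id})=0$ ($q=-1$ allowed). In the tensor algebra products are written $ab=a\otimes b$. For $p\ge2$, $1\le i\le p-1$, $R_i^{(p)}=\mathrm{Id}_V^{\otimes(i-1)}\otimes R\otimes\mathrm{Id}_V^{\otimes(p-i-1)}$ on $V^{\otimes p}$. $\Upsilon^{(0)}=\Bbbk$, $\Upsilon^{(1)}=V$, $\Upsilon^{(p)}=\bigcap_{i=1}^{p-1}(R_i^{(p)}-q\,\mathrm{Id})V^{\otimes p}$ for $p\ge2$. *)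

theory Defs
  imports Complex_Main "HOL-Library.Function_Algebras"
begin

text \<open>Coordinates: V has basis indexed by a finite type 'i; an element of the
tensor power V^(p) is a coefficient function on words (lists) of length p.
The value at w is the coefficient of e_(w!0) (x) ... (x) e_(w!(p-1)).\<close>

definition tpow :: "nat \<Rightarrow> ('i list \<Rightarrow> 'a::field) set" where
  "tpow p = {f. \<forall>w. length w \<noteq> p \<longrightarrow> f w = 0}"

definition sc :: "'a::field \<Rightarrow> ('i list \<Rightarrow> 'a) \<Rightarrow> ('i list \<Rightarrow> 'a)" where
  "sc c f = (\<lambda>w. c * f w)"

global_interpretation tens: vector_space "sc :: 'a::field \<Rightarrow> ('i list \<Rightarrow> 'a) \<Rightarrow> _"
  by unfold_locales (auto simp: sc_def fun_eq_iff algebra_simps)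

text \<open>Product in the tensor algebra: f of degree p times g.\<close>
definition tmul :: "nat \<Rightarrow> ('i list \<Rightarrow> 'a::field) \<Rightarrow> ('i list \<Rightarrow> 'a) \<Rightarrow> ('i list \<Rightarrow> 'a)" where
  "tmul p f g = (\<lambda>w. f (take p w) * g (drop p w))"

text \<open>R given by its matrix: R(e_c (x) e_d) = sum_{a,b} Rm a b c d e_a (x) e_b.
Ri p i is Id^(i-1) (x) R (x) Id^(p-i-1) on V^(p) (positions i, i+1, 1-based).\<close>
definition Ri :: "('i::finite \<Rightarrow> 'i \<Rightarrow> 'i \<Rightarrow> 'i \<Rightarrow> 'a::field) \<Rightarrow> nat \<Rightarrow> nat
    \<Rightarrow> ('i list \<Rightarrow> 'a) \<Rightarrow> ('i list \<Rightarrow> 'a)" where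
  "Ri Rm p i f = (\<lambda>w. if length w = p then
      (\<Sum>c\<in>UNIV. \<Sum>d\<in>UNIV. Rm (w!(i-1)) (w!i) c d * f (w[i-1 := c, i := d])) else 0)"

definition is_hecke :: "('i::finite \<Rightarrow> 'i \<Rightarrow> 'i \<Rightarrow> 'i \<Rightarrow> 'a::field) \<Rightarrow> 'a \<Rightarrow> bool" where
  "is_hecke Rm q \<longleftrightarrow> q \<noteq> 0 \<and>
     (\<forall>f\<in>tpow 3. Ri Rm 3 1 (Ri Rm 3 2 (Ri Rm 3 1 f)) = Ri Rm 3 2 (Ri Rm 3 1 (Ri Rm 3 2 f))) \<and>
     (\<forall>f\<in>tpow 2. Ri Rm 2 1 (Ri Rm 2 1 f + f) - sc q (Ri Rm 2 1 f + f) = 0)"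

text \<open>Upsilon^(p) = intersection over 1 \<le> i \<le> p-1 of (R_i - q Id) V^(p);
for p \<le> 1 the intersection is empty and this is V^(p) itself.\<close>
definition Ups :: "('i::finite \<Rightarrow> 'i \<Rightarrow> 'i \<Rightarrow> 'i \<Rightarrow> 'a::field) \<Rightarrow> 'a \<Rightarrow> nat \<Rightarrow> ('i list \<Rightarrow> 'a) set" where
  "Ups Rm q p = {f\<in>tpow p. \<forall>i. 1 \<le> i \<and> i \<le> p - 1 \<longrightarrow>
      (\<exists>g\<in>tpow p. f = Ri Rm p i g - sc q g)}"

text \<open>Rdown p k = R_k ... R_2 R_1 (R_1 applied first); Rup p k = R_1 R_2 ... R_k.\<close>
fun Rdown :: "('i::finite \<Rightarrow> 'i \<Rightarrow> 'i \<Rightarrow> 'i \<Rightarrow> 'a::field) \<Rightarrow> nat \<Rightarrow> nat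
    \<Rightarrow> ('i list \<Rightarrow> 'a) \<Rightarrow> ('i list \<Rightarrow> 'a)" where
  "Rdown Rm p 0 f = f"
| "Rdown Rm p (Suc k) f = Ri Rm p (Suc k) (Rdown Rm p k f)"

fun Rup :: "('i::finite \<Rightarrow> 'i \<Rightarrow> 'i \<Rightarrow> 'i \<Rightarrow> 'a::field) \<Rightarrow> nat \<Rightarrow> nat
    \<Rightarrow> ('i list \<Rightarrow> 'a) \<Rightarrow> ('i list \<Rightarrow> 'a)" where
  "Rup Rm p 0 f = f"
| "Rup Rm p (Suc k) f = Rup Rm p k (Ri Rm p (Suc k) f)"

definition in_GL :: "(('i list \<Rightarrow> 'a::field) \<Rightarrow> ('i list \<Rightarrow> 'a)) \<Rightarrow> bool" where
  "in_GL \<theta> \<longleftrightarrow> Vector_Spaces.linear sc sc \<theta> \<and> bij_betw \<theta> (tpow 1) (tpow 1)"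

end

theory Submission
  imports Defs
begin

(* For v in V the tensor v t lies in the image of R_j - q for 2 <= j <= n (because t does, one
   factor earlier), and R_n ... R_1 moves it into the image of R_i - q for 1 <= i < n.  Freezing the
   last letter of such a tensor gives an element of Upsilon^(n) = span t, so the tensor is t u;
   u depends linearly on v, which defines theta, and symmetrically theta-bar.
   For the composite put y_k = R_k ... R_1 (v t).  The quadratic relation gives
   R_k y_k = (q - 1) y_k + q y_(k-1), and R_k y_j = - y_j for j > k; pairing the terms k - 1 and k
   shows that the alternating sum  sum_k (-1)^k q^(n-k) y_k  lies in Upsilon^(n+1) = 0.  Applying
   R_1, ..., R_n successively to y_n and using this relation yields
   R_1 ... R_n R_n ... R_1 (v t) = q^(n+1) v t, i.e. theta-bar theta = q^(n+1) = theta theta-bar.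
   Relations between the R_i on V^(p) are reduced to the defining relations on V^(2) and V^(3)
   by restricting to windows of consecutive tensor factors. *)

section \<open>Linear operators on tensor powers\<close>

global_interpretation tens_pair: vector_space_pair
    "sc :: 'a::field \<Rightarrow> ('i list \<Rightarrow> 'a) \<Rightarrow> _" "sc :: 'a \<Rightarrow> ('j list \<Rightarrow> 'a) \<Rightarrow> _"
  by unfold_locales

lemma linear_scI:
  fixes f :: "('i list \<Rightarrow> 'a::field) \<Rightarrow> ('j list \<Rightarrow> 'a)"
  assumes "\<And>x y. f (x + y) = f x + f y" and "\<And>c x. f (sc c x) = sc c (f x)"
  shows "Vector_Spaces.linear sc sc f"
  by (simp add: Vector_Spaces.linear_iff assms tens.vector_space_axioms)

lemma subspace_tpow: "tens.subspace (tpow p)"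
  by (auto simp: tens.subspace_def tpow_def sc_def)

lemma Ri_tpow: "Ri Rm p i f \<in> tpow p"
  by (simp add: Ri_def tpow_def)

lemma linear_Ri: "Vector_Spaces.linear sc sc (Ri Rm p i)"
  by (rule linear_scI) (auto simp: Ri_def sc_def fun_eq_iff algebra_simps sum.distrib sum_distrib_left)

lemma sum_swap_pairs:
  "(\<Sum>c\<in>A. \<Sum>d\<in>B. \<Sum>c'\<in>C. \<Sum>d'\<in>D. G c d c' d') = (\<Sum>c'\<in>C. \<Sum>d'\<in>D. \<Sum>c\<in>A. \<Sum>d\<in>B. G c d c' d')"
proof -
  have "(\<Sum>c\<in>A. \<Sum>d\<in>B. \<Sum>c'\<in>C. \<Sum>d'\<in>D. G c d c' d') = (\<Sum>c\<in>A. \<Sum>c'\<in>C. \<Sum>d\<in>B. \<Sum>d'\<in>D. G c d c' d')"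
    by (rule sum.cong[OF refl], rule sum.swap)
  also have "\<dots> = (\<Sum>c'\<in>C. \<Sum>c\<in>A. \<Sum>d'\<in>D. \<Sum>d\<in>B. G c d c' d')"
    by (subst sum.swap) (rule sum.cong[OF refl], rule sum.cong[OF refl], rule sum.swap)
  also have "\<dots> = (\<Sum>c'\<in>C. \<Sum>d'\<in>D. \<Sum>c\<in>A. \<Sum>d\<in>B. G c d c' d')"
    by (rule sum.cong[OF refl], rule sum.swap)
  finally show ?thesis .
qed

lemma Ri_commute:
  fixes Rm :: "'i::finite \<Rightarrow> 'i \<Rightarrow> 'i \<Rightarrow> 'i \<Rightarrow> 'a::field"
  assumes "1 \<le> i" "i + 2 \<le> j"
  shows "Ri Rm p i (Ri Rm p j f) = Ri Rm p j (Ri Rm p i f)"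
proof
  fix w :: "'i list"
  obtain a b where ab: "i = Suc a" "j = Suc b" "Suc a < b"
    using assms by (cases i; cases j) auto
  have upd: "w[a := c, Suc a := d, b := c', Suc b := d'] = w[b := c', Suc b := d', a := c, Suc a := d]"
    for c d c' d'
    using ab by (simp add: list_update_swap)
  have nth: "w[a := c, Suc a := d] ! b = w ! b" "w[a := c, Suc a := d] ! Suc b = w ! Suc b"
    "w[b := c, Suc b := d] ! a = w ! a" "w[b := c, Suc b := d] ! Suc a = w ! Suc a" for c d
    using ab by simp_all
  show "Ri Rm p i (Ri Rm p j f) w = Ri Rm p j (Ri Rm p i f) w"
  proof (cases "length w = p")
    case True
    have "Ri Rm p i (Ri Rm p j f) w = (\<Sum>c\<in>UNIV. \<Sum>d\<in>UNIV. \<Sum>c'\<in>UNIV. \<Sum>d'\<in>UNIV.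
        Rm (w ! a) (w ! Suc a) c d * (Rm (w ! b) (w ! Suc b) c' d' * f (w[a := c, Suc a := d, b := c', Suc b := d'])))"
      using True ab by (simp add: Ri_def nth sum_distrib_left)
    also have "\<dots> = (\<Sum>c'\<in>UNIV. \<Sum>d'\<in>UNIV. \<Sum>c\<in>UNIV. \<Sum>d\<in>UNIV.
        Rm (w ! b) (w ! Suc b) c' d' * (Rm (w ! a) (w ! Suc a) c d * f (w[b := c', Suc b := d', a := c, Suc a := d])))"
      by (subst sum_swap_pairs) (simp only: upd mult.left_commute)
    also have "\<dots> = Ri Rm p j (Ri Rm p i f) w"
      using True ab by (simp add: Ri_def nth sum_distrib_left)
    finally show ?thesis .
  qed (simp add: Ri_def)
qed

definition window :: "('i list \<Rightarrow> 'a::field) \<Rightarrow> 'i list \<Rightarrow> 'i list \<Rightarrow> nat \<Rightarrow> 'i list \<Rightarrow> 'a" where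
  "window f xs ys m = (\<lambda>u. if length u = m then f (xs @ u @ ys) else 0)"

lemma window_tpow: "window f xs ys m \<in> tpow m"
  by (simp add: window_def tpow_def)

lemma linear_window: "Vector_Spaces.linear sc sc (\<lambda>f. window f xs ys m)"
  by (rule linear_scI) (auto simp: window_def sc_def fun_eq_iff)

lemma window_Ri:
  fixes Rm :: "'i::finite \<Rightarrow> 'i \<Rightarrow> 'i \<Rightarrow> 'i \<Rightarrow> 'a::field"
  assumes "length xs + m + length ys = p" "1 \<le> i" "i < m"
  shows "window (Ri Rm p (length xs + i) f) xs ys m = Ri Rm m i (window f xs ys m)"
proof
  fix u :: "'i list"
  have upd_at: "(xs @ v @ ys)[length xs + k := c] = xs @ v[k := c] @ ys" if "k < length v" for v k c
    using that by (simp add: list_update_append)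
  have upd: "(xs @ v @ ys)[length xs + i - Suc 0 := c, length xs + i := d] = xs @ v[i - Suc 0 := c, i := d] @ ys"
    if "i < length v" for v c d
    using upd_at[of "i - 1" v] upd_at[of i "v[i - 1 := c]"] assms that by simp
  show "window (Ri Rm p (length xs + i) f) xs ys m u = Ri Rm m i (window f xs ys m) u"
    using assms by (auto simp: window_def Ri_def upd nth_append)
qed

lemma tpow_eq_by_window:
  fixes f g :: "'i list \<Rightarrow> 'a::field"
  assumes "f \<in> tpow p" "g \<in> tpow p" "a + m \<le> p"
    and "\<And>xs ys. length xs = a \<Longrightarrow> length xs + m + length ys = p \<Longrightarrow> window f xs ys m = window g xs ys m"
  shows "f = g"
proof
  fix w :: "'i list"
  show "f w = g w"
  proof (cases "length w = p")
    case True
    let ?xs = "take a w" and ?u = "take m (drop a w)" and ?ys = "drop (a + m) w"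
    have w: "w = ?xs @ ?u @ ?ys"
      by (metis append_take_drop_id drop_drop add.commute)
    have "window f ?xs ?ys m ?u = window g ?xs ?ys m ?u"
      using True assms(3,4) by simp
    then show ?thesis
      using True assms(3) by (subst (1 2) w) (simp add: window_def)
  next
    case False
    then show ?thesis using assms(1,2) by (simp add: tpow_def)
  qed
qed

lemma Rdown_tpow: "f \<in> tpow p \<Longrightarrow> Rdown Rm p k f \<in> tpow p"
  by (cases k) (simp_all add: Ri_tpow)

lemma Rup_tpow: "f \<in> tpow p \<Longrightarrow> Rup Rm p k f \<in> tpow p"
  by (induction k arbitrary: f) (simp_all add: Ri_tpow)

lemma linear_Rdown: "Vector_Spaces.linear sc sc (Rdown Rm p k)"
proof (induction k)
  case 0
  then show ?case by (simp add: tens.linear_id[unfolded id_def])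
next
  case (Suc k)
  have "Rdown Rm p (Suc k) = Ri Rm p (Suc k) \<circ> Rdown Rm p k" by (simp add: fun_eq_iff)
  then show ?case using Vector_Spaces.linear_compose[OF Suc linear_Ri] by (simp only:)
qed

lemma linear_Rup: "Vector_Spaces.linear sc sc (Rup Rm p k)"
proof (induction k)
  case 0
  then show ?case by (simp add: tens.linear_id[unfolded id_def])
next
  case (Suc k)
  have "Rup Rm p (Suc k) = Rup Rm p k \<circ> Ri Rm p (Suc k)" by (simp add: fun_eq_iff)
  then show ?case using Vector_Spaces.linear_compose[OF linear_Ri Suc] by (simp only:)
qed

lemma Rdown_commute: "k + 2 \<le> j \<Longrightarrow> Ri Rm p j (Rdown Rm p k f) = Rdown Rm p k (Ri Rm p j f)"
proof (induction k)
  case (Suc k)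
  then show ?case by (simp add: Ri_commute[of "Suc k" j, symmetric])
qed simp

lemma Rup_commute: "k + 2 \<le> j \<Longrightarrow> Ri Rm p j (Rup Rm p k f) = Rup Rm p k (Ri Rm p j f)"
  by (induction k arbitrary: f) (simp_all add: Ri_commute)

lemma tmul_tpow:
  assumes "f \<in> tpow a" "g \<in> tpow b"
  shows "tmul a f g \<in> tpow (a + b)"
proof -
  have "f (take a w) * g (drop a w) = 0" if "length w \<noteq> a + b" for w
  proof (cases "a \<le> length w")
    case True
    then show ?thesis using that assms(2) by (simp add: tpow_def)
  next
    case False
    then show ?thesis using assms(1) by (simp add: tpow_def)
  qed
  then show ?thesis by (simp add: tmul_def tpow_def)
qed

lemma linear_tmul_left: "Vector_Spaces.linear sc sc (\<lambda>f. tmul a f g)"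
  by (rule linear_scI) (auto simp: tmul_def sc_def fun_eq_iff algebra_simps)

lemma linear_tmul_right: "Vector_Spaces.linear sc sc (tmul a f)"
  by (rule linear_scI) (auto simp: tmul_def sc_def fun_eq_iff algebra_simps)

lemma Ri_tmul_right:
  fixes Rm :: "'i::finite \<Rightarrow> 'i \<Rightarrow> 'i \<Rightarrow> 'i \<Rightarrow> 'a::field"
  assumes f: "f \<in> tpow a" and i: "1 \<le> i"
  shows "Ri Rm (a + m) (a + i) (tmul a f g) = tmul a f (Ri Rm m i g)"
proof
  fix w :: "'i list"
  obtain k where k: "i = Suc k" using i by (cases i) auto
  show "Ri Rm (a + m) (a + i) (tmul a f g) w = tmul a f (Ri Rm m i g) w"
  proof (cases "a \<le> length w")
    case True
    have "take a (w[a + k := c, Suc (a + k) := d]) = take a w"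
      and "drop a (w[a + k := c, Suc (a + k) := d]) = (drop a w)[k := c, Suc k := d]" for c d
      by (simp_all add: drop_update_swap)
    then show ?thesis
      using True k by (simp add: Ri_def tmul_def sum_distrib_left mult.left_commute)
  next
    case False
    then have "f (take a w) = 0" using f by (simp add: tpow_def)
    then show ?thesis using False by (simp add: Ri_def tmul_def)
  qed
qed

lemma Ri_tmul_left:
  fixes Rm :: "'i::finite \<Rightarrow> 'i \<Rightarrow> 'i \<Rightarrow> 'i \<Rightarrow> 'a::field"
  assumes g: "g \<in> tpow b" and i: "1 \<le> i" "i < m"
  shows "Ri Rm (m + b) i (tmul m f g) = tmul m (Ri Rm m i f) g"
proof
  fix w :: "'i list"
  obtain k where k: "i = Suc k" using i by (cases i) auto
  show "Ri Rm (m + b) i (tmul m f g) w = tmul m (Ri Rm m i f) g w"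
  proof (cases "length w = m + b")
    case True
    have "take m (w[k := c, Suc k := d]) = (take m w)[k := c, Suc k := d]"
      and "drop m (w[k := c, Suc k := d]) = drop m w" for c d
      using i k by (simp_all add: take_update_swap)
    then show ?thesis
      using True i k by (simp add: Ri_def tmul_def) (simp add: sum_distrib_right mult.assoc)
  next
    case False
    have "Ri Rm m i f (take m w) * g (drop m w) = 0"
    proof (cases "m \<le> length w")
      case True
      then show ?thesis using False g by (simp add: tpow_def)
    next
      case False
      then show ?thesis by (simp add: Ri_def)
    qed
    then show ?thesis using False by (simp add: Ri_def tmul_def)
  qed
qed

lemma window_tmul_right:
  assumes "length xs = a" "u \<in> tpow m"
  shows "window (tmul a f u) xs [] m = sc (f xs) u"
proof
  fix v
  show "window (tmul a f u) xs [] m v = sc (f xs) u v"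
    using assms by (cases "length v = m") (simp_all add: window_def tmul_def sc_def tpow_def)
qed

lemma window_tmul_left:
  assumes "u \<in> tpow m"
  shows "window (tmul m u g) [] ys m = sc (g ys) u"
proof
  fix v
  show "window (tmul m u g) [] ys m v = sc (g ys) u v"
    using assms by (cases "length v = m") (simp_all add: window_def tmul_def sc_def tpow_def)
qed

lemma tmul_cancel_left:
  assumes "t \<in> tpow n" "t \<noteq> 0" "u \<in> tpow m" "u' \<in> tpow m" "tmul n t u = tmul n t u'"
  shows "u = u'"
proof -
  obtain xs where xs: "t xs \<noteq> 0" using assms(2) by (auto simp: fun_eq_iff)
  then have "length xs = n" using assms(1) by (auto simp: tpow_def)
  then have "sc (t xs) u = sc (t xs) u'"
    using window_tmul_right assms(3-5) by metis
  then show ?thesis using xs by simp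
qed

lemma tmul_cancel_right:
  assumes "t \<noteq> 0" "u \<in> tpow m" "u' \<in> tpow m" "tmul m u t = tmul m u' t"
  shows "u = u'"
proof -
  obtain ys where ys: "t ys \<noteq> 0" using assms(1) by (auto simp: fun_eq_iff)
  have "sc (t ys) u = sc (t ys) u'"
    using window_tmul_left assms(2-4) by metis
  then show ?thesis using ys by simp
qed

section \<open>Images of the operators R_i - q\<close>

definition Rq_range :: "('i::finite \<Rightarrow> 'i \<Rightarrow> 'i \<Rightarrow> 'i \<Rightarrow> 'a::field) \<Rightarrow> 'a \<Rightarrow> nat \<Rightarrow> nat
    \<Rightarrow> ('i list \<Rightarrow> 'a) set" where
  "Rq_range Rm q p i = (\<lambda>g. Ri Rm p i g - sc q g) ` tpow p"

lemma Ups_iff: "f \<in> Ups Rm q p \<longleftrightarrow> f \<in> tpow p \<and> (\<forall>i. 1 \<le> i \<and> i < p \<longrightarrow> f \<in> Rq_range Rm q p i)"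
  unfolding Ups_def Rq_range_def by (auto simp: image_iff less_Suc_eq_le)

lemma subspace_Rq_range: "tens.subspace (Rq_range Rm q p i)"
proof -
  have "Vector_Spaces.linear sc sc (\<lambda>g. Ri Rm p i g - sc q g)"
    by (intro tens_pair.linear_compose_sub linear_Ri tens.linear_scale_self)
  then show ?thesis
    unfolding Rq_range_def using subspace_tpow by (rule tens_pair.linear_subspace_image)
qed

lemma Rq_range_map:
  assumes "Vector_Spaces.linear sc sc L" and "f \<in> Rq_range Rm q p i"
    and "\<And>g. g \<in> tpow p \<Longrightarrow> L g \<in> tpow p'"
    and "\<And>g. g \<in> tpow p \<Longrightarrow> L (Ri Rm p i g) = Ri Rm p' j (L g)"
  shows "L f \<in> Rq_range Rm q p' j"
proof -
  obtain g where g: "g \<in> tpow p" "f = Ri Rm p i g - sc q g"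
    using assms(2) by (auto simp: Rq_range_def)
  then have "L f = Ri Rm p' j (L g) - sc q (L g)"
    using assms(4) by (simp add: tens_pair.linear_diff[OF assms(1)] tens_pair.linear_scale[OF assms(1)])
  then show ?thesis using g assms(3) by (auto simp: Rq_range_def)
qed

lemma Rq_range_tmul_right:
  fixes Rm :: "'i::finite \<Rightarrow> 'i \<Rightarrow> 'i \<Rightarrow> 'i \<Rightarrow> 'a::field"
  assumes "f \<in> tpow a" "g \<in> Rq_range Rm q m i" "1 \<le> i"
  shows "tmul a f g \<in> Rq_range Rm q (a + m) (a + i)"
  by (rule Rq_range_map[OF linear_tmul_right assms(2)]) (use assms in \<open>simp_all add: tmul_tpow Ri_tmul_right\<close>)

lemma Rq_range_tmul_left:
  fixes Rm :: "'i::finite \<Rightarrow> 'i \<Rightarrow> 'i \<Rightarrow> 'i \<Rightarrow> 'a::field"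
  assumes "f \<in> Rq_range Rm q m i" "g \<in> tpow b" "1 \<le> i" "i < m"
  shows "tmul m f g \<in> Rq_range Rm q (m + b) i"
  by (rule Rq_range_map[OF linear_tmul_left assms(1)]) (use assms in \<open>simp_all add: tmul_tpow Ri_tmul_left\<close>)

section \<open>Factoring through a one-dimensional Upsilon\<close>

context vector_space
begin

lemma subset_span_singleton_if_dim_1:
  assumes "dim S = 1" "t \<in> S" "t \<noteq> 0"
  shows "S \<subseteq> span {t}"
proof -
  obtain B where B: "B \<subseteq> S" "S \<subseteq> span B" "card B = 1"
    using basis_exists assms(1) by metis
  then obtain e where e: "B = {e}" by (metis card_1_singletonE)
  have "t \<in> span {e}" using assms(2) B(2) e by blast
  then have "e \<in> span {t}" using assms(3) in_span_insert[of t e "{}"] by simp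
  then show ?thesis
    using B(2) e span_minimal[of "{e}" "span {t}"] by auto
qed

end

lemma tmul_factor_right:
  assumes t: "t \<in> tpow n" and F: "F \<in> tpow (n + m)"
    and slices: "\<And>ys. length ys = m \<Longrightarrow> window F [] ys n \<in> tens.span {t}"
  shows "\<exists>u\<in>tpow m. F = tmul n t u"
proof -
  obtain \<kappa> where \<kappa>: "\<And>ys. length ys = m \<Longrightarrow> window F [] ys n = sc (\<kappa> ys) t"
    using slices unfolding tens.span_singleton image_iff by metis
  define u where "u ys = (if length ys = m then \<kappa> ys else 0)" for ys
  have "u \<in> tpow m" by (simp add: u_def tpow_def)
  moreover have "F w = tmul n t u w" for w
  proof (cases "length w = n + m")
    case True
    then have "F w = window F [] (drop n w) n (take n w)" by (simp add: window_def)
    also have "\<dots> = \<kappa> (drop n w) * t (take n w)" using True \<kappa> by (simp add: sc_def)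
    finally show ?thesis using True by (simp add: tmul_def u_def)
  next
    case False
    have "t (take n w) * u (drop n w) = 0"
    proof (cases "n \<le> length w")
      case True
      then have "length (drop n w) \<noteq> m" using False by simp
      then show ?thesis by (simp add: u_def)
    next
      case short: False
      then have "length (take n w) \<noteq> n" by simp
      then show ?thesis using t by (simp add: tpow_def)
    qed
    then show ?thesis using False F by (simp add: tmul_def tpow_def)
  qed
  ultimately show ?thesis by blast
qed

lemma tmul_factor_left:
  assumes t: "t \<in> tpow n" and F: "F \<in> tpow (m + n)"
    and slices: "\<And>xs. length xs = m \<Longrightarrow> window F xs [] n \<in> tens.span {t}"
  shows "\<exists>u\<in>tpow m. F = tmul m u t"
proof -
  obtain \<kappa> where \<kappa>: "\<And>xs. length xs = m \<Longrightarrow> window F xs [] n = sc (\<kappa> xs) t"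
    using slices unfolding tens.span_singleton image_iff by metis
  define u where "u xs = (if length xs = m then \<kappa> xs else 0)" for xs
  have "u \<in> tpow m" by (simp add: u_def tpow_def)
  moreover have "F w = tmul m u t w" for w
  proof (cases "length w = m + n")
    case True
    then have "F w = window F (take m w) [] n (drop m w)" by (simp add: window_def)
    also have "\<dots> = \<kappa> (take m w) * t (drop m w)" using True \<kappa> by (simp add: sc_def)
    finally show ?thesis using True by (simp add: tmul_def u_def)
  next
    case False
    have "u (take m w) * t (drop m w) = 0"
    proof (cases "m \<le> length w")
      case True
      then have "length (drop m w) \<noteq> n" using False by simp
      then show ?thesis using t by (simp add: tpow_def)
    next
      case short: False
      then have "length (take m w) \<noteq> m" by simp
      then show ?thesis by (simp add: u_def del: length_take)
    qed
    then show ?thesis using False F by (simp add: tmul_def tpow_def)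
  qed
  ultimately show ?thesis by blast
qed

lemma tmul_factor_right_Ups:
  fixes Rm :: "'i::finite \<Rightarrow> 'i \<Rightarrow> 'i \<Rightarrow> 'i \<Rightarrow> 'a::field"
  assumes dim: "tens.dim (Ups Rm q n) = 1" and t: "t \<in> Ups Rm q n" "t \<noteq> 0"
    and F: "F \<in> tpow (n + m)" "\<forall>i. 1 \<le> i \<and> i < n \<longrightarrow> F \<in> Rq_range Rm q (n + m) i"
  shows "\<exists>u\<in>tpow m. F = tmul n t u"
proof (rule tmul_factor_right)
  show "t \<in> tpow n" using t by (simp add: Ups_iff)
  fix ys :: "'i list" assume ys: "length ys = m"
  have "window F [] ys n \<in> Ups Rm q n"
    unfolding Ups_iff
  proof (intro conjI allI impI window_tpow)
    fix i assume i: "1 \<le> i \<and> i < n"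
    then have "F \<in> Rq_range Rm q (n + m) i" using F(2) by blast
    then show "window F [] ys n \<in> Rq_range Rm q n i"
      by (rule Rq_range_map[OF linear_window])
        (use i ys window_Ri[of "[]" n ys "n + m" i Rm] in \<open>simp_all add: window_tpow\<close>)
  qed
  then show "window F [] ys n \<in> tens.span {t}"
    using tens.subset_span_singleton_if_dim_1[OF dim t] by blast
qed (rule F(1))

lemma tmul_factor_left_Ups:
  fixes Rm :: "'i::finite \<Rightarrow> 'i \<Rightarrow> 'i \<Rightarrow> 'i \<Rightarrow> 'a::field"
  assumes dim: "tens.dim (Ups Rm q n) = 1" and t: "t \<in> Ups Rm q n" "t \<noteq> 0"
    and F: "F \<in> tpow (m + n)" "\<forall>i. 1 \<le> i \<and> i < n \<longrightarrow> F \<in> Rq_range Rm q (m + n) (m + i)"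
  shows "\<exists>u\<in>tpow m. F = tmul m u t"
proof (rule tmul_factor_left)
  show "t \<in> tpow n" using t by (simp add: Ups_iff)
  fix xs :: "'i list" assume xs: "length xs = m"
  have "window F xs [] n \<in> Ups Rm q n"
    unfolding Ups_iff
  proof (intro conjI allI impI window_tpow)
    fix i assume i: "1 \<le> i \<and> i < n"
    then have "F \<in> Rq_range Rm q (m + n) (m + i)" using F(2) by blast
    then show "window F xs [] n \<in> Rq_range Rm q n i"
      by (rule Rq_range_map[OF linear_window])
        (use i xs window_Ri[of xs n "[]" "m + n" i Rm] in \<open>simp_all add: window_tpow\<close>)
  qed
  then show "window F xs [] n \<in> tens.span {t}"
    using tens.subset_span_singleton_if_dim_1[OF dim t] by blast
qed (rule F(1))

lemma ex_linear_factor_right: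
  assumes L: "Vector_Spaces.linear sc sc L" and t: "t \<in> tpow n" "t \<noteq> 0"
    and factor: "\<forall>v\<in>tpow m. \<exists>u\<in>tpow k. L v = tmul n t u"
  shows "\<exists>\<theta>. Vector_Spaces.linear sc sc \<theta> \<and> (\<forall>v. \<theta> v \<in> tpow k) \<and> (\<forall>v\<in>tpow m. L v = tmul n t (\<theta> v))"
proof -
  obtain xs where xs: "t xs \<noteq> 0" using t(2) by (auto simp: fun_eq_iff)
  then have len: "length xs = n" using t(1) by (auto simp: tpow_def)
  \<comment> \<open>an explicit formula rather than a choice, so that \<open>\<theta>\<close> is linear on the whole function space\<close>
  define \<theta> where "\<theta> v = sc (1 / t xs) (window (L v) xs [] k)" for v
  have "\<theta> = sc (1 / t xs) \<circ> ((\<lambda>f. window f xs [] k) \<circ> L)"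
    by (simp add: \<theta>_def fun_eq_iff)
  moreover have "Vector_Spaces.linear sc sc (sc (1 / t xs) \<circ> ((\<lambda>f. window f xs [] k) \<circ> L))"
    by (rule Vector_Spaces.linear_compose[OF Vector_Spaces.linear_compose[OF L linear_window]
          tens.linear_scale_self])
  ultimately have "Vector_Spaces.linear sc sc \<theta>" by simp
  moreover have "\<theta> v \<in> tpow k" for v
    unfolding \<theta>_def by (rule tens.subspace_scale[OF subspace_tpow window_tpow])
  moreover have "L v = tmul n t (\<theta> v)" if "v \<in> tpow m" for v
  proof -
    from bspec[OF factor that] obtain u where u: "u \<in> tpow k" "L v = tmul n t u" ..
    then have "\<theta> v = u" using xs len by (simp add: \<theta>_def window_tmul_right)
    then show ?thesis using u by simp
  qed
  ultimately show ?thesis by blast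
qed

lemma ex_linear_factor_left:
  assumes L: "Vector_Spaces.linear sc sc L" and t: "t \<noteq> 0"
    and factor: "\<forall>v\<in>tpow m. \<exists>u\<in>tpow k. L v = tmul k u t"
  shows "\<exists>\<theta>. Vector_Spaces.linear sc sc \<theta> \<and> (\<forall>v. \<theta> v \<in> tpow k) \<and> (\<forall>v\<in>tpow m. L v = tmul k (\<theta> v) t)"
proof -
  obtain ys where ys: "t ys \<noteq> 0" using t by (auto simp: fun_eq_iff)
  define \<theta> where "\<theta> v = sc (1 / t ys) (window (L v) [] ys k)" for v
  have "\<theta> = sc (1 / t ys) \<circ> ((\<lambda>f. window f [] ys k) \<circ> L)"
    by (simp add: \<theta>_def fun_eq_iff)
  moreover have "Vector_Spaces.linear sc sc (sc (1 / t ys) \<circ> ((\<lambda>f. window f [] ys k) \<circ> L))"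
    by (rule Vector_Spaces.linear_compose[OF Vector_Spaces.linear_compose[OF L linear_window]
          tens.linear_scale_self])
  ultimately have "Vector_Spaces.linear sc sc \<theta>" by simp
  moreover have "\<theta> v \<in> tpow k" for v
    unfolding \<theta>_def by (rule tens.subspace_scale[OF subspace_tpow window_tpow])
  moreover have "L v = tmul k (\<theta> v) t" if "v \<in> tpow m" for v
  proof -
    from bspec[OF factor that] obtain u where u: "u \<in> tpow k" "L v = tmul k u t" ..
    then have "\<theta> v = u" using ys by (simp add: \<theta>_def window_tmul_left)
    then show ?thesis using u by simp
  qed
  ultimately show ?thesis by blast
qed

lemma in_GL_if_scaled_inverse:
  fixes f g :: "('i list \<Rightarrow> 'a::field) \<Rightarrow> 'i list \<Rightarrow> 'a"
  assumes f: "Vector_Spaces.linear sc sc f" "\<forall>v\<in>tpow 1. f v \<in> tpow 1"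
    and g: "\<forall>v\<in>tpow 1. g v \<in> tpow 1" and c: "c \<noteq> 0"
    and gf: "\<forall>v\<in>tpow 1. g (f v) = sc c v" and fg: "\<forall>v\<in>tpow 1. f (g v) = sc c v"
  shows "in_GL f" and "\<forall>v\<in>tpow 1. g v = sc c (inv_into (tpow 1) f v)"
proof -
  have inj: "inj_on f (tpow 1)"
  proof (rule inj_onI)
    fix a b assume "a \<in> tpow 1" "b \<in> tpow 1" "f a = f b"
    then have "sc c a = sc c b" using gf by metis
    then show "a = b" using c by simp
  qed
  have preimage: "sc (1 / c) (g v) \<in> tpow 1 \<and> f (sc (1 / c) (g v)) = v" if "v \<in> tpow 1" for v
  proof
    show "sc (1 / c) (g v) \<in> tpow 1"
      using g that by (blast intro: tens.subspace_scale[OF subspace_tpow])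
    show "f (sc (1 / c) (g v)) = v"
      using fg that c by (simp add: tens_pair.linear_scale[OF f(1)])
  qed
  have "tpow 1 \<subseteq> f ` tpow 1"
  proof
    fix v :: "'i list \<Rightarrow> 'a" assume "v \<in> tpow 1"
    then show "v \<in> f ` tpow 1"
      using preimage[of v] image_eqI[of v f "sc (1 / c) (g v)" "tpow 1"] by simp
  qed
  then have "f ` tpow 1 = tpow 1" using f(2) by blast
  with inj f(1) show "in_GL f" by (simp add: in_GL_def bij_betw_def)
  show "\<forall>v\<in>tpow 1. g v = sc c (inv_into (tpow 1) f v)"
  proof
    fix v :: "'i list \<Rightarrow> 'a" assume v: "v \<in> tpow 1"
    then have "inv_into (tpow 1) f v = sc (1 / c) (g v)"
      using preimage[OF v] by (intro inv_into_f_eq[OF inj]) simp_all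
    then show "g v = sc c (inv_into (tpow 1) f v)" using c by simp
  qed
qed

section \<open>Hecke symmetries\<close>

locale hecke_symmetry =
  fixes Rm :: "'i::finite \<Rightarrow> 'i \<Rightarrow> 'i \<Rightarrow> 'i \<Rightarrow> 'a::field" and q :: 'a
  assumes hecke: "is_hecke Rm q"
begin

lemma q_nonzero: "q \<noteq> 0"
  using hecke by (simp add: is_hecke_def)

lemma Ri_quadratic_2:
  assumes "g \<in> tpow 2"
  shows "Ri Rm 2 1 (Ri Rm 2 1 g) = sc (q - 1) (Ri Rm 2 1 g) + sc q g"
proof -
  have "Ri Rm 2 1 (Ri Rm 2 1 g + g) = sc q (Ri Rm 2 1 g + g)"
    using hecke assms by (simp add: is_hecke_def)
  moreover have "Ri Rm 2 1 (Ri Rm 2 1 g + g) = Ri Rm 2 1 (Ri Rm 2 1 g) + Ri Rm 2 1 g"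
    by (simp add: tens_pair.linear_add[OF linear_Ri])
  ultimately show ?thesis
    by (simp add: fun_eq_iff sc_def algebra_simps)
qed

lemma Ri_quadratic:
  assumes f: "f \<in> tpow p" and i: "1 \<le> i" "i < p"
  shows "Ri Rm p i (Ri Rm p i f) = sc (q - 1) (Ri Rm p i f) + sc q f"
proof (rule tpow_eq_by_window[where a = "i - 1" and m = 2])
  show "Ri Rm p i (Ri Rm p i f) \<in> tpow p" by (rule Ri_tpow)
  show "sc (q - 1) (Ri Rm p i f) + sc q f \<in> tpow p"
    using f Ri_tpow subspace_tpow by (blast intro: tens.subspace_add tens.subspace_scale)
  show "i - 1 + 2 \<le> p" using i by simp
  fix xs ys :: "'i list"
  assume len: "length xs = i - 1" "length xs + 2 + length ys = p"
  then have i_eq: "i = length xs + 1" using i by simp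
  have R: "window (Ri Rm p i g) xs ys 2 = Ri Rm 2 1 (window g xs ys 2)" for g
    unfolding i_eq using window_Ri[of xs 2 ys p 1] len by simp
  show "window (Ri Rm p i (Ri Rm p i f)) xs ys 2 = window (sc (q - 1) (Ri Rm p i f) + sc q f) xs ys 2"
    unfolding R Ri_quadratic_2[OF window_tpow]
    by (simp add: tens_pair.linear_add[OF linear_window] tens_pair.linear_scale[OF linear_window] R)
qed

lemma Ri_braid:
  assumes i: "1 \<le> i" "Suc i < p"
  shows "Ri Rm p i (Ri Rm p (Suc i) (Ri Rm p i f)) = Ri Rm p (Suc i) (Ri Rm p i (Ri Rm p (Suc i) f))"
proof (rule tpow_eq_by_window[where a = "i - 1" and m = 3])
  show "i - 1 + 3 \<le> p" using i by simp
  fix xs ys :: "'i list"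
  assume len: "length xs = i - 1" "length xs + 3 + length ys = p"
  then have i_eq: "i = length xs + 1" "Suc i = length xs + 2" using i by simp_all
  have R1: "window (Ri Rm p i g) xs ys 3 = Ri Rm 3 1 (window g xs ys 3)"
    and R2: "window (Ri Rm p (Suc i) g) xs ys 3 = Ri Rm 3 2 (window g xs ys 3)" for g
    unfolding i_eq using window_Ri[of xs 3 ys p 1] window_Ri[of xs 3 ys p 2] len by simp_all
  show "window (Ri Rm p i (Ri Rm p (Suc i) (Ri Rm p i f))) xs ys 3 =
      window (Ri Rm p (Suc i) (Ri Rm p i (Ri Rm p (Suc i) f))) xs ys 3"
    using hecke window_tpow[of f xs ys 3] by (simp add: R1 R2 is_hecke_def)
qed (simp_all add: Ri_tpow)

lemma Ri_on_Rq_range: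
  assumes "f \<in> Rq_range Rm q p i" "1 \<le> i" "i < p"
  shows "Ri Rm p i f = - f"
proof -
  obtain g where g: "g \<in> tpow p" "f = Ri Rm p i g - sc q g"
    using assms(1) by (auto simp: Rq_range_def)
  then have "Ri Rm p i f = Ri Rm p i (Ri Rm p i g) - sc q (Ri Rm p i g)"
    by (simp add: tens_pair.linear_diff[OF linear_Ri] tens_pair.linear_scale[OF linear_Ri])
  also have "\<dots> = - f"
    using g assms(2,3) by (simp add: Ri_quadratic fun_eq_iff sc_def algebra_simps)
  finally show ?thesis .
qed

lemma Rdown_Ri_Suc:
  "1 \<le> i \<Longrightarrow> i < k \<Longrightarrow> k < p \<Longrightarrow> Rdown Rm p k (Ri Rm p (Suc i) f) = Ri Rm p i (Rdown Rm p k f)"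
proof (induction k arbitrary: i)
  case 0
  then show ?case by simp
next
  case (Suc k)
  show ?case
  proof (cases "i < k")
    case True
    then show ?thesis using Suc by (simp add: Ri_commute[of i "Suc k", symmetric])
  next
    case False
    then have i: "i = k" "Suc i < p" using Suc.prems by simp_all
    then obtain k' where k': "k = Suc k'" using Suc.prems by (cases k) auto
    have "Rdown Rm p (Suc k) (Ri Rm p (Suc i) f)
        = Ri Rm p (Suc i) (Ri Rm p i (Ri Rm p (Suc i) (Rdown Rm p k' f)))"
      using i k' by (simp add: Rdown_commute)
    also have "\<dots> = Ri Rm p i (Ri Rm p (Suc i) (Ri Rm p i (Rdown Rm p k' f)))"
      using Ri_braid Suc.prems i by simp
    finally show ?thesis using i k' by simp
  qed
qed

lemma Rup_Ri:
  "1 \<le> i \<Longrightarrow> i < k \<Longrightarrow> k < p \<Longrightarrow> Rup Rm p k (Ri Rm p i f) = Ri Rm p (Suc i) (Rup Rm p k f)"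
proof (induction k arbitrary: i f)
  case 0
  then show ?case by simp
next
  case (Suc k)
  show ?case
  proof (cases "i < k")
    case True
    then show ?thesis using Suc by (simp add: Ri_commute[of i "Suc k", symmetric])
  next
    case False
    then have i: "i = k" "Suc i < p" using Suc.prems by simp_all
    then obtain k' where k': "k = Suc k'" using Suc.prems by (cases k) auto
    have "Rup Rm p (Suc k) (Ri Rm p i f)
        = Rup Rm p k' (Ri Rm p (Suc i) (Ri Rm p i (Ri Rm p (Suc i) f)))"
      using i k' Ri_braid Suc.prems by simp
    also have "\<dots> = Ri Rm p (Suc i) (Rup Rm p (Suc k) f)"
      using i k' by (simp add: Rup_commute)
    finally show ?thesis .
  qed
qed

lemma inj_on_Rup:
  assumes "k < p"
  shows "inj_on (Rup Rm p k) (tpow p)"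
  unfolding tens_pair.linear_inj_on_iff_eq_0[OF linear_Rup subspace_tpow]
  using assms
proof (induction k)
  case (Suc k)
  show ?case
  proof (intro ballI impI)
    fix f assume f: "f \<in> tpow p" "Rup Rm p (Suc k) f = 0"
    have "\<forall>g\<in>tpow p. Rup Rm p k g = 0 \<longrightarrow> g = 0"
      using Suc by (simp add: zero_fun_def)
    then have "Ri Rm p (Suc k) f = 0"
      using Ri_tpow[of Rm p "Suc k" f] f(2) by simp
    then have "sc q f = 0"
      using Ri_quadratic[OF f(1), of "Suc k"] Suc.prems
      by (simp add: tens_pair.linear_0[OF linear_Ri])
    then show "f = 0" using q_nonzero by simp
  qed
qed simp

subsection \<open>The alternating sum\<close>

definition alt_sum :: "nat \<Rightarrow> ('i list \<Rightarrow> 'a) \<Rightarrow> nat \<Rightarrow> 'i list \<Rightarrow> 'a" where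
  "alt_sum n x k = (\<Sum>j = k..n. sc ((-1) ^ (j - k) * q ^ (n - j)) (Rdown Rm (Suc n) j x))"

lemma alt_sum_Suc:
  assumes "k \<le> n"
  shows "alt_sum n x k = sc (q ^ (n - k)) (Rdown Rm (Suc n) k x) - alt_sum n x (Suc k)"
proof -
  have "sc ((-1) ^ (j - k) * q ^ (n - j)) (Rdown Rm (Suc n) j x) =
      - sc ((-1) ^ (j - Suc k) * q ^ (n - j)) (Rdown Rm (Suc n) j x)" if "Suc k \<le> j" for j
  proof -
    have "j - k = Suc (j - Suc k)" using that by simp
    then show ?thesis by simp
  qed
  then show ?thesis
    using assms by (simp add: alt_sum_def sum.atLeast_Suc_atMost sum_negf)
qed

lemma alt_sum_empty: "alt_sum n x (Suc n) = 0"
  by (simp add: alt_sum_def)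

lemma Ri_alt_sum:
  assumes x: "\<forall>j. 2 \<le> j \<and> j \<le> n \<longrightarrow> Ri Rm (Suc n) j x = - x" and k: "1 \<le> k"
  shows "Ri Rm (Suc n) k (alt_sum n x (Suc k)) = - alt_sum n x (Suc k)"
proof -
  have "Ri Rm (Suc n) k (Rdown Rm (Suc n) j x) = - Rdown Rm (Suc n) j x" if "j \<in> {Suc k..n}" for j
    using that k x Rdown_Ri_Suc[of k j "Suc n" x] by (simp add: tens_pair.linear_neg[OF linear_Rdown])
  then show ?thesis
    by (simp add: alt_sum_def tens_pair.linear_sum[OF linear_Ri] tens_pair.linear_scale[OF linear_Ri] sum_negf)
qed

lemma Rup_Rdown_alt_sum:
  assumes x: "x \<in> tpow (Suc n)" and Rx: "\<forall>j. 2 \<le> j \<and> j \<le> n \<longrightarrow> Ri Rm (Suc n) j x = - x"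
  shows "Rup Rm (Suc n) n (Rdown Rm (Suc n) n x) = sc (q ^ Suc n) x - sc (q - 1) (alt_sum n x 0)"
proof -
  define y where "y k = Rdown Rm (Suc n) k x" for k
  have "Rup Rm (Suc n) n (y n)
      = Rup Rm (Suc n) k (sc (q ^ (n - k)) (y k) + sc (q - 1) (alt_sum n x (Suc k)))"
    if "k \<le> n" for k
    using that
  proof (induction k rule: inc_induct)
    case base
    then show ?case by (simp add: alt_sum_empty sc_def)
  next
    case (step k)
    have Ry: "Ri Rm (Suc n) (Suc k) (y (Suc k)) = sc (q - 1) (y (Suc k)) + sc q (y k)"
      using Ri_quadratic[of "y k" "Suc n" "Suc k"] x step.hyps by (simp add: y_def Rdown_tpow)
    have RA: "Ri Rm (Suc n) (Suc k) (alt_sum n x (Suc (Suc k))) = - alt_sum n x (Suc (Suc k))"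
      using Ri_alt_sum[OF Rx] by simp
    have "n - k = Suc (n - Suc k)" using step.hyps by simp
    then have nk: "q ^ (n - k) = q * q ^ (n - Suc k)" by simp
    have "Ri Rm (Suc n) (Suc k)
          (sc (q ^ (n - Suc k)) (y (Suc k)) + sc (q - 1) (alt_sum n x (Suc (Suc k))))
        = sc (q ^ (n - Suc k)) (sc (q - 1) (y (Suc k)) + sc q (y k))
          - sc (q - 1) (alt_sum n x (Suc (Suc k)))"
      by (simp add: tens_pair.linear_add[OF linear_Ri] tens_pair.linear_scale[OF linear_Ri] Ry RA)
    also have "\<dots> = sc (q ^ (n - k)) (y k)
        + sc (q - 1) (sc (q ^ (n - Suc k)) (y (Suc k)) - alt_sum n x (Suc (Suc k)))"
      by (simp add: nk fun_eq_iff sc_def algebra_simps)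
    also have "\<dots> = sc (q ^ (n - k)) (y k) + sc (q - 1) (alt_sum n x (Suc k))"
      using step.hyps by (simp add: alt_sum_Suc y_def)
    finally show ?case using step.IH by (metis Rup.simps(2))
  qed
  from this[of 0] have "Rup Rm (Suc n) n (y n) = sc (q ^ n) x + sc (q - 1) (alt_sum n x (Suc 0))"
    by (simp add: y_def)
  moreover have "alt_sum n x (Suc 0) = sc (q ^ n) x - alt_sum n x 0"
    using alt_sum_Suc[of 0 n x] by simp
  ultimately show ?thesis
    by (simp add: y_def fun_eq_iff sc_def algebra_simps)
qed

lemma alt_sum_in_Ups:
  assumes x: "x \<in> tpow (Suc n)" and Rx: "\<forall>j. 2 \<le> j \<and> j \<le> n \<longrightarrow> x \<in> Rq_range Rm q (Suc n) j"
  shows "alt_sum n x 0 \<in> Ups Rm q (Suc n)"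
  unfolding Ups_iff
proof (intro conjI allI impI)
  define y where "y j = Rdown Rm (Suc n) j x" for j
  define c where "c j = (-1) ^ j * q ^ (n - j)" for j :: nat
  have y: "y j \<in> tpow (Suc n)" for j
    using x by (simp add: y_def Rdown_tpow)
  have sum: "alt_sum n x 0 = (\<Sum>j = 0..n. sc (c j) (y j))"
    by (simp add: alt_sum_def c_def y_def)
  show "alt_sum n x 0 \<in> tpow (Suc n)"
    unfolding sum using y subspace_tpow by (blast intro: tens.subspace_sum tens.subspace_scale)
  fix i assume i: "1 \<le> i \<and> i < Suc n"
  let ?S = "Rq_range Rm q (Suc n) i"
  have far: "y j \<in> ?S" if "j \<le> n" "j \<noteq> i - 1" "j \<noteq> i" for j
  proof (cases "j < i")
    case True
    then have "x \<in> ?S" using Rx i that by simp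
    then show ?thesis
      unfolding y_def
      by (rule Rq_range_map[OF linear_Rdown]) (use True that(2) in \<open>simp_all add: Rdown_tpow Rdown_commute\<close>)
  next
    case False
    then have ij: "i < j" "j < Suc n" using that by simp_all
    then have "x \<in> Rq_range Rm q (Suc n) (Suc i)" using Rx i that by simp
    then show ?thesis
      unfolding y_def
      by (rule Rq_range_map[OF linear_Rdown]) (use i ij in \<open>simp_all add: Rdown_tpow Rdown_Ri_Suc\<close>)
  qed
  have "sc (c (i - 1)) (y (i - 1)) + sc (c i) (y i)
      = sc (c i) (Ri Rm (Suc n) i (y (i - 1)) - sc q (y (i - 1)))"
  proof -
    obtain k where k: "i = Suc k" using i by (cases i) auto
    have "n - k = Suc (n - i)" using i k by simp
    then have "c k = - q * c i" by (simp add: c_def k)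
    then show ?thesis by (simp add: k y_def fun_eq_iff sc_def algebra_simps)
  qed
  also have "\<dots> \<in> ?S"
    using y by (intro tens.subspace_scale[OF subspace_Rq_range]) (simp add: Rq_range_def)
  finally have near: "sc (c (i - 1)) (y (i - 1)) + sc (c i) (y i) \<in> ?S" .
  have "alt_sum n x 0
      = (\<Sum>j \<in> {0..n} - {i - 1, i}. sc (c j) (y j)) + (sc (c (i - 1)) (y (i - 1)) + sc (c i) (y i))"
    using i unfolding sum by (subst sum.subset_diff[of "{i - 1, i}"]) auto
  also have "\<dots> \<in> ?S"
    using far near subspace_Rq_range by (auto intro!: tens.subspace_add tens.subspace_sum tens.subspace_scale)
  finally show "alt_sum n x 0 \<in> ?S" .
qed

lemma Rup_Rdown_scalar:
  assumes top: "Ups Rm q (Suc n) = {0}" and x: "x \<in> tpow (Suc n)"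
    and Rx: "\<forall>j. 2 \<le> j \<and> j \<le> n \<longrightarrow> x \<in> Rq_range Rm q (Suc n) j"
  shows "Rup Rm (Suc n) n (Rdown Rm (Suc n) n x) = sc (q ^ Suc n) x"
proof -
  have "alt_sum n x 0 = 0" using alt_sum_in_Ups[OF x Rx] top by simp
  moreover have "\<forall>j. 2 \<le> j \<and> j \<le> n \<longrightarrow> Ri Rm (Suc n) j x = - x" using Rx Ri_on_Rq_range by simp
  ultimately show ?thesis using Rup_Rdown_alt_sum[OF x] by simp
qed

subsection \<open>The operators theta and theta-bar\<close>

lemma Rq_range_tmul_Ups:
  assumes "v \<in> tpow 1" "t \<in> Ups Rm q n" "1 \<le> i" "i < n"
  shows "tmul 1 v t \<in> Rq_range Rm q (Suc n) (Suc i)"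
    and "tmul n t v \<in> Rq_range Rm q (Suc n) i"
  using assms Rq_range_tmul_right[of v 1 t Rm q n i] Rq_range_tmul_left[of t Rm q n i v 1]
  by (simp_all add: Ups_iff)

lemma Rdown_tmul_factor:
  assumes dim: "tens.dim (Ups Rm q n) = 1" and t: "t \<in> Ups Rm q n" "t \<noteq> 0" and v: "v \<in> tpow 1"
  shows "\<exists>u\<in>tpow 1. Rdown Rm (Suc n) n (tmul 1 v t) = tmul n t u"
proof -
  have "Rdown Rm (Suc n) n (tmul 1 v t) \<in> Rq_range Rm q (n + 1) i" if "1 \<le> i" "i < n" for i
    by (rule Rq_range_map[OF linear_Rdown Rq_range_tmul_Ups(1)[OF v t(1) that]])
      (use that in \<open>simp_all add: Rdown_tpow Rdown_Ri_Suc\<close>)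
  moreover have "Rdown Rm (Suc n) n (tmul 1 v t) \<in> tpow (n + 1)"
    using v t(1) tmul_tpow[of v 1 t n] by (simp add: Rdown_tpow Ups_iff)
  ultimately show ?thesis
    using tmul_factor_right_Ups[OF dim t] by blast
qed

lemma Rup_tmul_factor:
  assumes dim: "tens.dim (Ups Rm q n) = 1" and t: "t \<in> Ups Rm q n" "t \<noteq> 0" and v: "v \<in> tpow 1"
  shows "\<exists>u\<in>tpow 1. Rup Rm (Suc n) n (tmul n t v) = tmul 1 u t"
proof -
  have "Rup Rm (Suc n) n (tmul n t v) \<in> Rq_range Rm q (1 + n) (1 + i)" if "1 \<le> i" "i < n" for i
    by (rule Rq_range_map[OF linear_Rup Rq_range_tmul_Ups(2)[OF v t(1) that]])
      (use that in \<open>simp_all add: Rup_tpow Rup_Ri\<close>)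
  moreover have "Rup Rm (Suc n) n (tmul n t v) \<in> tpow (1 + n)"
    using v t(1) tmul_tpow[of t n v 1] by (simp add: Rup_tpow Ups_iff)
  ultimately show ?thesis
    using tmul_factor_left_Ups[OF dim t] by blast
qed

lemma braiding_factors_scaled_inverse:
  assumes top: "Ups Rm q (Suc n) = {0}" and t: "t \<in> Ups Rm q n" "t \<noteq> 0"
    and \<theta>: "\<forall>v. \<theta> v \<in> tpow 1" "\<forall>v\<in>tpow 1. Rdown Rm (Suc n) n (tmul 1 v t) = tmul n t (\<theta> v)"
    and \<theta>': "\<forall>v. \<theta>' v \<in> tpow 1" "\<forall>v\<in>tpow 1. Rup Rm (Suc n) n (tmul n t v) = tmul 1 (\<theta>' v) t"
  shows "\<forall>v\<in>tpow 1. \<theta>' (\<theta> v) = sc (q ^ Suc n) v" and "\<forall>v\<in>tpow 1. \<theta> (\<theta>' v) = sc (q ^ Suc n) v"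
proof -
  let ?Q = "q ^ Suc n"
  have tn: "t \<in> tpow n" using t(1) by (simp add: Ups_iff)
  have tmul_tpow_1: "tmul 1 v t \<in> tpow (Suc n)" if "v \<in> tpow 1" for v
    using tmul_tpow[OF that tn] by simp
  have cycle: "Rup Rm (Suc n) n (Rdown Rm (Suc n) n (tmul 1 v t)) = sc ?Q (tmul 1 v t)" if v: "v \<in> tpow 1" for v
  proof (rule Rup_Rdown_scalar[OF top tmul_tpow_1[OF v]], intro allI impI)
    fix j assume "2 \<le> j \<and> j \<le> n"
    then obtain i where "j = Suc i" "1 \<le> i" "i < n" by (cases j) auto
    then show "tmul 1 v t \<in> Rq_range Rm q (Suc n) j" using Rq_range_tmul_Ups(1)[OF v t(1)] by simp
  qed
  show "\<forall>v\<in>tpow 1. \<theta>' (\<theta> v) = sc ?Q v"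
  proof
    fix v :: "'i list \<Rightarrow> 'a" assume v: "v \<in> tpow 1"
    have "tmul 1 (\<theta>' (\<theta> v)) t = Rup Rm (Suc n) n (Rdown Rm (Suc n) n (tmul 1 v t))"
      using v \<theta> \<theta>' by simp
    also have "\<dots> = tmul 1 (sc ?Q v) t"
      using cycle[OF v] by (simp add: tens_pair.linear_scale[OF linear_tmul_left])
    finally show "\<theta>' (\<theta> v) = sc ?Q v"
      by (rule tmul_cancel_right[OF t(2) \<theta>'(1)[rule_format] tens.subspace_scale[OF subspace_tpow v]])
  qed
  show "\<forall>v\<in>tpow 1. \<theta> (\<theta>' v) = sc ?Q v"
  proof
    fix v :: "'i list \<Rightarrow> 'a" assume v: "v \<in> tpow 1"
    have "Rup Rm (Suc n) n (Rdown Rm (Suc n) n (tmul 1 (\<theta>' v) t)) = sc ?Q (tmul 1 (\<theta>' v) t)"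
      by (rule cycle[OF \<theta>'(1)[rule_format]])
    also have "\<dots> = sc ?Q (Rup Rm (Suc n) n (tmul n t v))"
      using v \<theta>'(2) by simp
    also have "\<dots> = Rup Rm (Suc n) n (sc ?Q (tmul n t v))"
      by (simp add: tens_pair.linear_scale[OF linear_Rup])
    finally have "Rdown Rm (Suc n) n (tmul 1 (\<theta>' v) t) = sc ?Q (tmul n t v)"
    proof (rule inj_onD[OF inj_on_Rup[OF lessI]])
      show "Rdown Rm (Suc n) n (tmul 1 (\<theta>' v) t) \<in> tpow (Suc n)"
        by (rule Rdown_tpow[OF tmul_tpow_1[OF \<theta>'(1)[rule_format]]])
      show "sc ?Q (tmul n t v) \<in> tpow (Suc n)"
        using tmul_tpow[OF tn v] by (simp add: tens.subspace_scale[OF subspace_tpow])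
    qed
    then have "tmul n t (\<theta> (\<theta>' v)) = tmul n t (sc ?Q v)"
      using \<theta> \<theta>' by (simp add: tens_pair.linear_scale[OF linear_tmul_right])
    then show "\<theta> (\<theta>' v) = sc ?Q v"
      by (rule tmul_cancel_left[OF tn t(2) \<theta>(1)[rule_format] tens.subspace_scale[OF subspace_tpow v]])
  qed
qed

end

theorem proposition3p1:
  fixes Rm :: "'i::finite \<Rightarrow> 'i \<Rightarrow> 'i \<Rightarrow> 'i \<Rightarrow> 'a::field"
    and q :: 'a and n :: nat and t :: "'i list \<Rightarrow> 'a"
  assumes hecke: "is_hecke Rm q"
    and n_pos: "n > 0"
    and dim1: "tens.dim (Ups Rm q n) = 1"
    and top0: "Ups Rm q (Suc n) = {0}"
    and t_in: "t \<in> Ups Rm q n" and t_nz: "t \<noteq> 0"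
  shows "\<exists>\<theta> \<theta>b. in_GL \<theta> \<and> in_GL \<theta>b
     \<and> (\<forall>v\<in>tpow 1. Rdown Rm (Suc n) n (tmul 1 v t) = tmul n t (\<theta> v))
     \<and> (\<forall>v\<in>tpow 1. Rup Rm (Suc n) n (tmul n t v) = tmul 1 (\<theta>b v) t)
     \<and> (\<forall>v\<in>tpow 1. \<theta>b v = sc (q ^ (n + 1)) (inv_into (tpow 1) \<theta> v))"
proof -
  interpret hecke_symmetry Rm q by (rule hecke_symmetry.intro[OF hecke])
  have t: "t \<in> tpow n" using t_in by (simp add: Ups_iff)
  have "Vector_Spaces.linear sc sc (\<lambda>v. Rdown Rm (Suc n) n (tmul 1 v t))"
    using Vector_Spaces.linear_compose[OF linear_tmul_left linear_Rdown] by (simp add: comp_def)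
  from ex_linear_factor_right[OF this t t_nz ballI[OF Rdown_tmul_factor[OF dim1 t_in t_nz]]]
  obtain \<theta> where \<theta>: "Vector_Spaces.linear sc sc \<theta>" "\<forall>v. \<theta> v \<in> tpow 1"
      "\<forall>v\<in>tpow 1. Rdown Rm (Suc n) n (tmul 1 v t) = tmul n t (\<theta> v)"
    by blast
  have "Vector_Spaces.linear sc sc (\<lambda>v. Rup Rm (Suc n) n (tmul n t v))"
    using Vector_Spaces.linear_compose[OF linear_tmul_right linear_Rup] by (simp add: comp_def)
  from ex_linear_factor_left[OF this t_nz ballI[OF Rup_tmul_factor[OF dim1 t_in t_nz]]]
  obtain \<theta>b where \<theta>b: "Vector_Spaces.linear sc sc \<theta>b" "\<forall>v. \<theta>b v \<in> tpow 1"
      "\<forall>v\<in>tpow 1. Rup Rm (Suc n) n (tmul n t v) = tmul 1 (\<theta>b v) t"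
    by blast
  note inverse = braiding_factors_scaled_inverse[OF top0 t_in t_nz \<theta>(2,3) \<theta>b(2,3)]
  have Q: "q ^ Suc n \<noteq> 0" using q_nonzero by simp
  have tpow_closed: "\<forall>v\<in>tpow 1. \<theta> v \<in> tpow 1" "\<forall>v\<in>tpow 1. \<theta>b v \<in> tpow 1"
    using \<theta>(2) \<theta>b(2) by blast+
  show ?thesis
    using in_GL_if_scaled_inverse[OF \<theta>(1) tpow_closed Q inverse]
      in_GL_if_scaled_inverse(1)[OF \<theta>b(1) tpow_closed(2,1) Q inverse(2,1)] \<theta>(3) \<theta>b(3)
    unfolding Suc_eq_plus1 by blast
qed

end
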